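(* Let $p,q$ be integers with $q\geqslant p>2$ and $p+q=n$, and let $T$ be an $n$-vertex tree whose vertex bipartition has parts of sizes $p$ and $q$. Then $\xi^{ee}(T)\leqslant\frac{5n-4}{6}$, with equality if and only if $T\cong P_2(p-1,q-1)$.
   Context: For a vertex $x$ of a connected graph $G$, $\varepsilon_G(x)$ is its eccentricity and $d_G(x)$ its degree; $\xi^{ee}(G)=\sum_{uv\in E(G)}\left(\frac{1}{\varepsilon_G(u)}+\frac{1}{\varepsilon_G(v)}\right)=\sum_{x}\frac{d_G(x)}{\varepsilon_G(x)}$. A tree has a $(p,q)$-bipartition if its vertex set splits into two independent sets of sizes $p$ and $q$. $P_2(a,b)$ is the tree on $a+b+2$ vertices obtained from an edge $xy$ by attaching $a$ pendant vertices to $x$ and $b$ pendant vertices to $y$. *)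

theory Defs
  imports Complex_Main
begin

definition simple_graph :: "'a set \<Rightarrow> 'a set set \<Rightarrow> bool" where
  "simple_graph V E \<longleftrightarrow> finite V \<and>
     (\<forall>e\<in>E. \<exists>u v. e = {u, v} \<and> u \<in> V \<and> v \<in> V \<and> u \<noteq> v)"

definition is_walk :: "'a set \<Rightarrow> 'a set set \<Rightarrow> 'a list \<Rightarrow> bool" where
  "is_walk V E xs \<longleftrightarrow> xs \<noteq> [] \<and> set xs \<subseteq> V \<and>
     (\<forall>i. Suc i < length xs \<longrightarrow> {xs ! i, xs ! Suc i} \<in> E)"

definition connected_graph :: "'a set \<Rightarrow> 'a set set \<Rightarrow> bool" where
  "connected_graph V E \<longleftrightarrow> V \<noteq> {} \<and>
     (\<forall>u\<in>V. \<forall>v\<in>V. \<exists>xs. is_walk V E xs \<and> hd xs = u \<and> last xs = v)"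

definition is_cycle :: "'a set \<Rightarrow> 'a set set \<Rightarrow> 'a list \<Rightarrow> bool" where
  "is_cycle V E xs \<longleftrightarrow> is_walk V E xs \<and> distinct xs \<and> length xs \<ge> 3 \<and>
     {last xs, hd xs} \<in> E"

definition is_tree :: "'a set \<Rightarrow> 'a set set \<Rightarrow> bool" where
  "is_tree V E \<longleftrightarrow> simple_graph V E \<and> connected_graph V E \<and>
     \<not> (\<exists>xs. is_cycle V E xs)"

definition gdist :: "'a set \<Rightarrow> 'a set set \<Rightarrow> 'a \<Rightarrow> 'a \<Rightarrow> nat" where
  "gdist V E u v = (LEAST k. \<exists>xs. is_walk V E xs \<and> hd xs = u \<and> last xs = v
                                 \<and> length xs = Suc k)"

definition ecc :: "'a set \<Rightarrow> 'a set set \<Rightarrow> 'a \<Rightarrow> nat" where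
  "ecc V E x = Max (gdist V E x ` V)"

definition degree :: "'a set set \<Rightarrow> 'a \<Rightarrow> nat" where
  "degree E x = card {e \<in> E. x \<in> e}"

definition xi_ee :: "'a set \<Rightarrow> 'a set set \<Rightarrow> real" where
  "xi_ee V E = (\<Sum>x\<in>V. real (degree E x) / real (ecc V E x))"

definition independent :: "'a set set \<Rightarrow> 'a set \<Rightarrow> bool" where
  "independent E A \<longleftrightarrow> (\<forall>u\<in>A. \<forall>v\<in>A. {u, v} \<notin> E)"

definition has_bipartition :: "'a set \<Rightarrow> 'a set set \<Rightarrow> nat \<Rightarrow> nat \<Rightarrow> bool" where
  "has_bipartition V E p q \<longleftrightarrow> (\<exists>A B. A \<union> B = V \<and> A \<inter> B = {} \<and>
     independent E A \<and> independent E B \<and> card A = p \<and> card B = q)"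

definition graph_iso :: "'a set \<Rightarrow> 'a set set \<Rightarrow> 'b set \<Rightarrow> 'b set set \<Rightarrow> bool" where
  "graph_iso V E V' E' \<longleftrightarrow> (\<exists>f. bij_betw f V V' \<and>
     (\<forall>u\<in>V. \<forall>v\<in>V. {u, v} \<in> E \<longleftrightarrow> {f u, f v} \<in> E'))"

text \<open>P_2(a,b): vertices 0..a+b+1, edge {0,1}; pendants 2..a+1 at 0, a+2..a+b+1 at 1.\<close>
definition P2_verts :: "nat \<Rightarrow> nat \<Rightarrow> nat set" where
  "P2_verts a b = {0..a + b + 1}"

definition P2_edges :: "nat \<Rightarrow> nat \<Rightarrow> nat set set" where
  "P2_edges a b = {{0, 1}} \<union> (\<lambda>i. {0, i}) ` {2..a + 1} \<union> (\<lambda>i. {1, i}) ` {a + 2..a + b + 1}"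

end

theory Submission
  imports Defs
begin

text \<open>If both colour classes have at least two vertices, no vertex is adjacent to all others, so every
  eccentricity is at least 2 and \<open>d(v)/\<epsilon>(v) \<le> d(v)/3 + [\<epsilon>(v) = 2] d(v)/6\<close>. In a tree without
  such a vertex, two vertices of eccentricity 2 are adjacent (otherwise a cycle of length at most 5
  appears), so they span at most one edge \<open>xy\<close>, and their degrees add up to
  \<open>|N(x) \<union> N(y)| \<le> n\<close>. With \<open>\<Sum> d(v) = 2n - 2\<close> this gives \<open>\<xi>\<^sup>e\<^sup>e \<le> (4(n - 1) + n)/6\<close>.
  Equality forces \<open>N(x) \<union> N(y) = V\<close>, i.e. a double star with centres \<open>x\<close> and \<open>y\<close>; the
  bipartition identifies it as \<open>P\<^sub>2(p - 1, q - 1)\<close>, for which the value \<open>(5n - 4)/6\<close> is computed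
  directly.\<close>

section \<open>Walks, distances and eccentricities\<close>

lemma is_walk_singleton [simp]: "is_walk V E [a] \<longleftrightarrow> a \<in> V"
  unfolding is_walk_def by auto

lemma is_walk_Cons_Cons [simp]:
  "is_walk V E (a # b # xs) \<longleftrightarrow> a \<in> V \<and> {a, b} \<in> E \<and> is_walk V E (b # xs)"
proof
  assume w: "is_walk V E (a # b # xs)"
  have "{(a # b # xs) ! i, (a # b # xs) ! Suc i} \<in> E" if "Suc i < length (a # b # xs)" for i
    using w that unfolding is_walk_def by blast
  from this[of 0] this[of "Suc _"] w show "a \<in> V \<and> {a, b} \<in> E \<and> is_walk V E (b # xs)"
    unfolding is_walk_def by auto
next
  assume h: "a \<in> V \<and> {a, b} \<in> E \<and> is_walk V E (b # xs)"
  show "is_walk V E (a # b # xs)"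
    unfolding is_walk_def
  proof (intro conjI allI impI)
    fix i assume i: "Suc i < length (a # b # xs)"
    show "{(a # b # xs) ! i, (a # b # xs) ! Suc i} \<in> E"
    proof (cases i)
      case (Suc j)
      then show ?thesis using h i unfolding is_walk_def by auto
    qed (use h in simp)
  qed (use h in \<open>auto simp: is_walk_def\<close>)
qed

lemma gdist_le_length:
  "is_walk V E xs \<Longrightarrow> hd xs = u \<Longrightarrow> last xs = v \<Longrightarrow> length xs = Suc k \<Longrightarrow> gdist V E u v \<le> k"
  unfolding gdist_def by (rule Least_le) blast

lemma gdist_shortest_walk:
  assumes "connected_graph V E" "u \<in> V" "v \<in> V"
  obtains xs where "is_walk V E xs" "hd xs = u" "last xs = v" "length xs = Suc (gdist V E u v)"
proof -
  obtain xs where "is_walk V E xs" "hd xs = u" "last xs = v"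
    using assms unfolding connected_graph_def by blast
  then have "\<exists>k xs. is_walk V E xs \<and> hd xs = u \<and> last xs = v \<and> length xs = Suc k"
    by (metis is_walk_def length_greater_0_conv Suc_pred)
  then have "\<exists>xs. is_walk V E xs \<and> hd xs = u \<and> last xs = v \<and> length xs = Suc (gdist V E u v)"
    unfolding gdist_def by (rule LeastI_ex)
  with that show ?thesis by blast
qed

lemma gdist_le_1_cases:
  assumes "connected_graph V E" "u \<in> V" "v \<in> V" "gdist V E u v \<le> 1"
  shows "u = v \<or> {u, v} \<in> E"
proof -
  obtain xs where xs: "is_walk V E xs" "hd xs = u" "last xs = v" "length xs = Suc (gdist V E u v)"
    using gdist_shortest_walk[OF assms(1-3)] .
  with assms(4) consider "length xs = 1" | "length xs = 2" by linarith
  then show ?thesis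
    by cases (use xs in \<open>auto simp: length_Suc_conv numeral_eq_Suc\<close>)
qed

lemma gdist_le_2_cases:
  assumes "connected_graph V E" "u \<in> V" "v \<in> V" "gdist V E u v \<le> 2"
  shows "u = v \<or> {u, v} \<in> E \<or> (\<exists>w\<in>V. {u, w} \<in> E \<and> {w, v} \<in> E)"
proof -
  obtain xs where xs: "is_walk V E xs" "hd xs = u" "last xs = v" "length xs = Suc (gdist V E u v)"
    using gdist_shortest_walk[OF assms(1-3)] .
  with assms(4) consider "length xs = 1" | "length xs = 2" | "length xs = 3" by linarith
  then show ?thesis
    by cases (use xs in \<open>auto simp: length_Suc_conv numeral_eq_Suc\<close>)
qed

lemma gdist_le_ecc: "finite V \<Longrightarrow> v \<in> V \<Longrightarrow> gdist V E x v \<le> ecc V E x"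
  unfolding ecc_def by (rule Max_ge) auto

lemma ecc_eqI:
  assumes "finite V" "w \<in> V" "k \<le> gdist V E x w" "\<And>v. v \<in> V \<Longrightarrow> gdist V E x v \<le> k"
  shows "ecc V E x = k"
proof (rule antisym)
  show "ecc V E x \<le> k" unfolding ecc_def using assms by (auto intro: Max.boundedI)
  show "k \<le> ecc V E x" using assms(3) gdist_le_ecc[OF assms(1,2)] by (rule le_trans)
qed

section \<open>Simple graphs\<close>

definition neighbours :: "'a set \<Rightarrow> 'a set set \<Rightarrow> 'a \<Rightarrow> 'a set" where
  "neighbours V E x = {v \<in> V. {x, v} \<in> E}"

lemma simple_graph_edgeD:
  assumes "simple_graph V E" "{a, b} \<in> E"
  shows "a \<in> V \<and> b \<in> V \<and> a \<noteq> b"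
proof -
  obtain u v where "{a, b} = {u, v}" "u \<in> V" "v \<in> V" "u \<noteq> v"
    using assms unfolding simple_graph_def by blast
  then show ?thesis by (auto simp: doubleton_eq_iff)
qed

lemma simple_graph_edgeE:
  assumes "simple_graph V E" "e \<in> E"
  obtains u v where "e = {u, v}" "u \<in> V" "v \<in> V" "u \<noteq> v"
  using assms unfolding simple_graph_def by blast

lemma simple_graph_finite_edges:
  assumes "simple_graph V E"
  shows "finite E"
proof -
  have "E \<subseteq> Pow V" and "finite V"
    using assms unfolding simple_graph_def by auto
  then show ?thesis by (meson finite_Pow_iff finite_subset)
qed

lemma simple_graph_delete_vertex:
  assumes sg: "simple_graph V E"
  shows "simple_graph (V - {v}) {e \<in> E. v \<notin> e}"
  unfolding simple_graph_def
proof
  show "finite (V - {v})" using sg unfolding simple_graph_def by simp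
  show "\<forall>e\<in>{e \<in> E. v \<notin> e}. \<exists>a b. e = {a, b} \<and> a \<in> V - {v} \<and> b \<in> V - {v} \<and> a \<noteq> b"
  proof
    fix e assume "e \<in> {e \<in> E. v \<notin> e}"
    then have e: "e \<in> E" "v \<notin> e" by auto
    then obtain a b where ab: "e = {a, b}" "a \<in> V" "b \<in> V" "a \<noteq> b"
      using simple_graph_edgeE[OF sg] by blast
    with e(2) show "\<exists>a b. e = {a, b} \<and> a \<in> V - {v} \<and> b \<in> V - {v} \<and> a \<noteq> b" by blast
  qed
qed

lemma card_edges_delete_vertex:
  assumes "finite E"
  shows "card E = card {e \<in> E. v \<notin> e} + degree E v"
proof -
  have "E = {e \<in> E. v \<notin> e} \<union> {e \<in> E. v \<in> e}" by auto
  then show ?thesis unfolding degree_def using assms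
    by (metis (no_types, lifting) card_Un_disjoint disjoint_iff finite_Un mem_Collect_eq)
qed

lemma not_in_neighbours_self: "simple_graph V E \<Longrightarrow> x \<notin> neighbours V E x"
  unfolding neighbours_def using simple_graph_edgeD[of V E x x] by auto

lemma degree_eq_card_neighbours:
  assumes "simple_graph V E"
  shows "degree E x = card (neighbours V E x)"
proof -
  have "{e \<in> E. x \<in> e} = (\<lambda>v. {x, v}) ` neighbours V E x"
  proof (intro equalityI subsetI)
    fix e assume e: "e \<in> {e \<in> E. x \<in> e}"
    then obtain u v where "e = {u, v}" "u \<in> V" "v \<in> V"
      using simple_graph_edgeE[OF assms] by blast
    with e show "e \<in> (\<lambda>v. {x, v}) ` neighbours V E x"
      unfolding neighbours_def by (auto simp: insert_commute)
  qed (auto simp: neighbours_def)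
  moreover have "inj_on (\<lambda>v. {x, v}) (neighbours V E x)"
    by (auto simp: inj_on_def doubleton_eq_iff)
  ultimately show ?thesis unfolding degree_def by (simp add: card_image)
qed

lemma sum_degree_eq_twice_card_edges:
  assumes "simple_graph V E"
  shows "(\<Sum>x\<in>V. degree E x) = 2 * card E"
proof -
  have fV: "finite V" and fE: "finite E"
    using assms simple_graph_finite_edges unfolding simple_graph_def by auto
  have two: "card {x \<in> V. x \<in> e} = 2" if e: "e \<in> E" for e
  proof -
    obtain u v where "e = {u, v}" "u \<in> V" "v \<in> V" "u \<noteq> v"
      using simple_graph_edgeE[OF assms e] by blast
    then have "{x \<in> V. x \<in> e} = {u, v}" by auto
    with \<open>u \<noteq> v\<close> show ?thesis by simp
  qed
  have "(\<Sum>x\<in>V. degree E x) = (\<Sum>x\<in>V. \<Sum>e\<in>E. if x \<in> e then 1 else 0)"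
    unfolding degree_def by (simp add: sum.inter_filter[OF fE, symmetric])
  also have "\<dots> = (\<Sum>e\<in>E. \<Sum>x\<in>V. if x \<in> e then 1 else 0)"
    by (rule sum.swap)
  also have "\<dots> = (\<Sum>e\<in>E. card {x \<in> V. x \<in> e})"
    by (simp add: sum.inter_filter[OF fV, symmetric])
  also have "\<dots> = 2 * card E"
    using two by simp
  finally show ?thesis .
qed

section \<open>Cycle-free graphs\<close>

definition cycle_free :: "'a set \<Rightarrow> 'a set set \<Rightarrow> bool" where
  "cycle_free V E \<longleftrightarrow> \<not> (\<exists>xs. is_cycle V E xs)"

lemma is_walk_mono:
  assumes "is_walk V' E' xs" "V' \<subseteq> V" "E' \<subseteq> E"
  shows "is_walk V E xs"
  using assms unfolding is_walk_def by blast

lemma cycle_free_subgraph: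
  "cycle_free V E \<Longrightarrow> V' \<subseteq> V \<Longrightarrow> E' \<subseteq> E \<Longrightarrow> cycle_free V' E'"
  unfolding cycle_free_def is_cycle_def using is_walk_mono by blast

lemma is_walk_drop:
  assumes "is_walk V E xs" "j < length xs"
  shows "is_walk V E (drop j xs)"
  unfolding is_walk_def
proof (intro conjI allI impI)
  fix i assume "Suc i < length (drop j xs)"
  then have "Suc (j + i) < length xs" by simp
  then have "{xs ! (j + i), xs ! Suc (j + i)} \<in> E" using assms(1) unfolding is_walk_def by blast
  with assms(2) show "{drop j xs ! i, drop j xs ! Suc i} \<in> E" by simp
qed (use assms set_drop_subset[of j xs] in \<open>auto simp: is_walk_def\<close>)

lemma is_walk_snoc:
  assumes "is_walk V E xs" "w \<in> V" "{last xs, w} \<in> E"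
  shows "is_walk V E (xs @ [w])"
  unfolding is_walk_def
proof (intro conjI allI impI)
  fix i assume i: "Suc i < length (xs @ [w])"
  have "xs \<noteq> []" using assms(1) unfolding is_walk_def by simp
  show "{(xs @ [w]) ! i, (xs @ [w]) ! Suc i} \<in> E"
  proof (cases "Suc i < length xs")
    case True
    then show ?thesis using assms(1) unfolding is_walk_def by (auto simp: nth_append)
  next
    case False
    with i have "i = length xs - 1" by simp
    then have "(xs @ [w]) ! i = last xs" "(xs @ [w]) ! Suc i = w"
      using \<open>xs \<noteq> []\<close> by (auto simp: nth_append last_conv_nth)
    with assms(3) show ?thesis by simp
  qed
qed (use assms in \<open>auto simp: is_walk_def\<close>)

text \<open>A longest path ends in a vertex all of whose neighbours lie on the path; a second neighbour
  besides its predecessor closes a cycle.\<close>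
lemma min_degree_ge_2_has_cycle:
  assumes sg: "simple_graph V E" and ne: "V \<noteq> {}" and deg: "\<And>v. v \<in> V \<Longrightarrow> 2 \<le> degree E v"
  shows "\<exists>xs. is_cycle V E xs"
proof -
  have fV: "finite V" using sg unfolding simple_graph_def by auto
  obtain v0 where v0: "v0 \<in> V" using ne by blast
  let ?P = "\<lambda>xs. is_walk V E xs \<and> distinct xs"
  have bnd: "\<forall>ys. ?P ys \<longrightarrow> length ys < Suc (card V)"
    using fV card_mono[of V] distinct_card unfolding is_walk_def by (metis less_Suc_eq_le)
  obtain xs where xs: "?P xs" and longest: "\<forall>ys. ?P ys \<longrightarrow> length ys \<le> length xs"
    using ex_has_greatest_nat[of ?P "[v0]" length, OF _ bnd] v0 by auto
  define L where "L = length xs"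
  define v where "v = last xs"
  have xs_ne: "xs \<noteq> []" using xs unfolding is_walk_def by simp
  then have v_nth: "xs ! (L - 1) = v" unfolding v_def L_def by (simp add: last_conv_nth)
  have vV: "v \<in> V" using xs xs_ne unfolding v_def is_walk_def by auto
  have "2 \<le> card (neighbours V E v)" using deg[OF vV] degree_eq_card_neighbours[OF sg] by simp
  then obtain a b where "a \<in> neighbours V E v" "b \<in> neighbours V E v" "a \<noteq> b"
    using card_le_Suc0_iff_eq[of "neighbours V E v"] card.infinite by force
  then obtain w where w: "w \<in> neighbours V E v" "2 \<le> L \<Longrightarrow> w \<noteq> xs ! (L - 2)"
    by metis
  then have wE: "{v, w} \<in> E" "w \<in> V" unfolding neighbours_def by auto
  have "w \<in> set xs"
  proof (rule ccontr)
    assume "w \<notin> set xs"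
    then have "?P (xs @ [w])" using xs is_walk_snoc[OF _ wE(2)] wE(1) unfolding v_def by auto
    with longest show False by fastforce
  qed
  then obtain j where j: "j < L" "xs ! j = w" unfolding L_def by (metis in_set_conv_nth)
  have "j \<noteq> L - 1" using j v_nth simple_graph_edgeD[OF sg wE(1)] by auto
  moreover have "2 \<le> L \<Longrightarrow> j \<noteq> L - 2" using j w(2) by auto
  ultimately have jL: "j + 3 \<le> L" using j(1) by linarith
  have "is_cycle V E (drop j xs)"
    unfolding is_cycle_def
  proof (intro conjI)
    show "is_walk V E (drop j xs)" using is_walk_drop xs j unfolding L_def by blast
    show "distinct (drop j xs)" using xs by simp
    show "3 \<le> length (drop j xs)" using jL unfolding L_def by simp
    have "hd (drop j xs) = w" using j unfolding L_def by (simp add: hd_drop_conv_nth)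
    moreover have "last (drop j xs) = v" using j unfolding L_def v_def by simp
    ultimately show "{last (drop j xs), hd (drop j xs)} \<in> E" using wE(1) by simp
  qed
  then show ?thesis by blast
qed

lemma cycle_free_card_edges_less:
  assumes "simple_graph V E" "cycle_free V E" "V \<noteq> {}"
  shows "card E < card V"
  using assms
proof (induction "card V" arbitrary: V E rule: less_induct)
  case less
  have fV: "finite V" using less.prems(1) unfolding simple_graph_def by simp
  have fE: "finite E" using simple_graph_finite_edges[OF less.prems(1)] .
  have "\<not> (\<forall>v\<in>V. 2 \<le> degree E v)"
    using min_degree_ge_2_has_cycle[OF less.prems(1,3)] less.prems(2) unfolding cycle_free_def by blast
  then obtain v where v: "v \<in> V" "degree E v \<le> 1" by (auto simp: not_le less_Suc_eq_le)
  define V' where "V' = V - {v}"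
  define E' where "E' = {e \<in> E. v \<notin> e}"
  have sg': "simple_graph V' E'"
    using simple_graph_delete_vertex[OF less.prems(1)] unfolding V'_def E'_def .
  have cf': "cycle_free V' E'"
    by (rule cycle_free_subgraph[OF less.prems(2)]) (auto simp: V'_def E'_def)
  have cE: "card E = card E' + degree E v"
    using card_edges_delete_vertex[OF fE] unfolding E'_def .
  show ?case
  proof (cases "V' = {}")
    case True
    then have "V = {v}" using v unfolding V'_def by auto
    then have "E = {}" using less.prems(1) unfolding simple_graph_def by auto
    with \<open>V = {v}\<close> show ?thesis by simp
  next
    case False
    have "card V' < card V" unfolding V'_def using fV v(1) by (rule card_Diff1_less)
    with less.hyps sg' cf' False have "card E' < card V'" by blast
    with cE v fV show ?thesis unfolding V'_def by (simp add: card_Diff_singleton)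
  qed
qed

lemma cycle_free_no_triangle:
  assumes "simple_graph V E" "cycle_free V E" "{a, b} \<in> E" "{b, c} \<in> E" "{c, a} \<in> E"
  shows False
proof -
  have "is_cycle V E [a, b, c]"
    using assms(3-5) simple_graph_edgeD[OF assms(1) assms(3)] simple_graph_edgeD[OF assms(1) assms(4)]
      simple_graph_edgeD[OF assms(1) assms(5)]
    unfolding is_cycle_def by auto
  with assms(2) show False unfolding cycle_free_def by blast
qed

lemma cycle_free_no_square:
  assumes "simple_graph V E" "cycle_free V E" "{a, b} \<in> E" "{b, c} \<in> E" "{c, d} \<in> E" "{d, a} \<in> E"
    and "a \<noteq> c" "b \<noteq> d"
  shows False
proof -
  have "is_cycle V E [a, b, c, d]"
    using assms(3-8) simple_graph_edgeD[OF assms(1) assms(3)] simple_graph_edgeD[OF assms(1) assms(4)]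
      simple_graph_edgeD[OF assms(1) assms(5)] simple_graph_edgeD[OF assms(1) assms(6)]
    unfolding is_cycle_def by auto
  with assms(2) show False unfolding cycle_free_def by blast
qed

lemma cycle_free_no_pentagon:
  assumes "simple_graph V E" "cycle_free V E"
    and "{a, b} \<in> E" "{b, c} \<in> E" "{c, d} \<in> E" "{d, e} \<in> E" "{e, a} \<in> E" "distinct [a, b, c, d, e]"
  shows False
proof -
  have "is_cycle V E [a, b, c, d, e]"
    using assms(3-8) simple_graph_edgeD[OF assms(1) assms(3)] simple_graph_edgeD[OF assms(1) assms(4)]
      simple_graph_edgeD[OF assms(1) assms(5)] simple_graph_edgeD[OF assms(1) assms(6)]
    unfolding is_cycle_def by auto
  with assms(2) show False unfolding cycle_free_def by blast
qed

lemma cycle_free_neighbours_disjoint: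
  assumes "simple_graph V E" "cycle_free V E" "{x, y} \<in> E"
  shows "neighbours V E x \<inter> neighbours V E y = {}"
proof (rule ccontr)
  assume "neighbours V E x \<inter> neighbours V E y \<noteq> {}"
  then obtain v where "{x, v} \<in> E" "{y, v} \<in> E" unfolding neighbours_def by blast
  with assms show False using cycle_free_no_triangle[OF assms(1,2), of x y v] by (simp add: insert_commute)
qed

section \<open>Vertices of eccentricity two\<close>

definition universal_vertex :: "'a set \<Rightarrow> 'a set set \<Rightarrow> 'a \<Rightarrow> bool" where
  "universal_vertex V E z \<longleftrightarrow> z \<in> V \<and> (\<forall>v\<in>V. v \<noteq> z \<longrightarrow> {z, v} \<in> E)"

lemma bipartition_not_universal_vertex:
  assumes "has_bipartition V E p q" "2 \<le> p" "2 \<le> q"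
  shows "\<not> universal_vertex V E z"
proof
  assume z: "universal_vertex V E z"
  have no_part: False if S: "z \<in> S" "S \<subseteq> V" "independent E S" "2 \<le> card S" for S
  proof -
    have "finite S" using S(4) by (intro card_ge_0_finite) linarith
    with S(4) have "\<not> (\<forall>a\<in>S. \<forall>b\<in>S. a = b)" using card_le_Suc0_iff_eq[of S] by linarith
    then obtain v where "v \<in> S" "v \<noteq> z" by metis
    with S z show False unfolding universal_vertex_def independent_def by blast
  qed
  obtain A B where AB: "A \<union> B = V" "independent E A" "independent E B" "card A = p" "card B = q"
    using assms(1) unfolding has_bipartition_def by blast
  have "z \<in> A \<or> z \<in> B" using z AB(1) unfolding universal_vertex_def by blast
  then show False
  proof
    assume "z \<in> A"
    with AB assms(2) show False using no_part[of A] by blast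
  next
    assume "z \<in> B"
    with AB assms(3) show False using no_part[of B] by blast
  qed
qed

lemma ecc_ge_2_if_not_universal_vertex:
  assumes "connected_graph V E" "finite V" "x \<in> V" "\<not> universal_vertex V E x"
  shows "2 \<le> ecc V E x"
proof -
  obtain v where v: "v \<in> V" "v \<noteq> x" "{x, v} \<notin> E"
    using assms(3,4) unfolding universal_vertex_def by blast
  then have "\<not> gdist V E x v \<le> 1" using gdist_le_1_cases[OF assms(1,3) v(1)] by blast
  then show ?thesis using gdist_le_ecc[OF assms(2) v(1), of E x] by linarith
qed

lemma cycle_free_gdist_other_neighbour:
  assumes sg: "simple_graph V E" and conn: "connected_graph V E" and cf: "cycle_free V E"
    and z: "{x, z} \<in> E" "{z, y} \<in> E" and nxy: "{x, y} \<notin> E" and xy: "x \<noteq> y"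
    and v: "v \<in> V" "{x, v} \<in> E" "v \<noteq> z"
  shows "2 < gdist V E y v"
proof (rule ccontr)
  assume "\<not> 2 < gdist V E y v"
  moreover have yV: "y \<in> V" using simple_graph_edgeD[OF sg z(2)] by simp
  ultimately consider "y = v" | "{y, v} \<in> E" | u where "u \<in> V" "{y, u} \<in> E" "{u, v} \<in> E"
    using gdist_le_2_cases[OF conn yV v(1)] by force
  then show False
  proof cases
    case 1 with v(2) nxy show False by simp
  next
    case 2
    then show False using cycle_free_no_square[OF sg cf v(2), of y z] z xy v(3)
      by (simp add: insert_commute)
  next
    case (3 u)
    show False
    proof (cases "u = z")
      case True
      with 3 z show False using cycle_free_no_triangle[OF sg cf v(2), of z] by (simp add: insert_commute)
    next
      case False
      have "u \<noteq> x" using 3(2) nxy by (metis insert_commute)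
      moreover have "v \<noteq> y" using v(2) nxy by auto
      moreover have "u \<noteq> v" "u \<noteq> y" "x \<noteq> v" "x \<noteq> z" "y \<noteq> z"
        using simple_graph_edgeD[OF sg 3(3)] simple_graph_edgeD[OF sg 3(2)] simple_graph_edgeD[OF sg v(2)]
          simple_graph_edgeD[OF sg z(1)] simple_graph_edgeD[OF sg z(2)] by auto
      ultimately have "distinct [x, v, u, y, z]" using False v(3) xy by auto
      with 3 z show False using cycle_free_no_pentagon[OF sg cf v(2), of u y z]
        by (simp add: insert_commute)
    qed
  qed
qed

text \<open>If \<open>x\<close> and \<open>y\<close> were at distance 2 through \<open>z\<close>, then \<open>z\<close> would be the only neighbour of \<open>x\<close>,
  and then every vertex would be adjacent to \<open>z\<close>.\<close>
lemma ecc_le_2_adjacent: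
  assumes sg: "simple_graph V E" and conn: "connected_graph V E" and cf: "cycle_free V E"
    and no_univ: "\<And>z. \<not> universal_vertex V E z"
    and xV: "x \<in> V" and yV: "y \<in> V" and xy: "x \<noteq> y"
    and ex: "ecc V E x \<le> 2" and ey: "ecc V E y \<le> 2"
  shows "{x, y} \<in> E"
proof (rule ccontr)
  assume nxy: "{x, y} \<notin> E"
  have fV: "finite V" using sg unfolding simple_graph_def by auto
  have dx: "gdist V E x v \<le> 2" and dy: "gdist V E y v \<le> 2" if "v \<in> V" for v
    using le_trans[OF gdist_le_ecc[OF fV that] ex] le_trans[OF gdist_le_ecc[OF fV that] ey] .
  obtain z where z: "z \<in> V" "{x, z} \<in> E" "{z, y} \<in> E"
    using gdist_le_2_cases[OF conn xV yV dx[OF yV]] xy nxy by blast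
  have only_nbr: "v = z" if v: "v \<in> V" "{x, v} \<in> E" for v
    using cycle_free_gdist_other_neighbour[OF sg conn cf z(2,3) nxy xy v] dy[OF v(1)] by linarith
  have "{z, v} \<in> E" if v: "v \<in> V" "v \<noteq> z" for v
  proof -
    consider "x = v" | "{x, v} \<in> E" | u where "u \<in> V" "{x, u} \<in> E" "{u, v} \<in> E"
      using gdist_le_2_cases[OF conn xV v(1) dx[OF v(1)]] by blast
    then show ?thesis
    proof cases
      case 1 with z(2) show ?thesis by (simp add: insert_commute)
    next
      case 2 with only_nbr v show ?thesis by blast
    next
      case (3 u) with only_nbr show ?thesis by blast
    qed
  qed
  with z(1) no_univ show False unfolding universal_vertex_def by blast
qed

lemma ecc_le_2_vertices_cases:
  assumes sg: "simple_graph V E" and conn: "connected_graph V E" and cf: "cycle_free V E"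
    and no_univ: "\<And>z. \<not> universal_vertex V E z"
  shows "(\<exists>x. {x \<in> V. ecc V E x \<le> 2} \<subseteq> {x}) \<or>
    (\<exists>x y. {x \<in> V. ecc V E x \<le> 2} = {x, y} \<and> {x, y} \<in> E)"
proof -
  let ?C = "{x \<in> V. ecc V E x \<le> 2}"
  have adj: "{x, y} \<in> E" if "x \<in> ?C" "y \<in> ?C" "x \<noteq> y" for x y
    using ecc_le_2_adjacent[OF sg conn cf no_univ] that by blast
  show ?thesis
  proof (cases "\<exists>x. ?C \<subseteq> {x}")
    case False
    then obtain x y where xy: "x \<in> ?C" "y \<in> ?C" "x \<noteq> y" by blast
    have "?C = {x, y}"
    proof (rule ccontr)
      assume "?C \<noteq> {x, y}"
      then obtain w where "w \<in> ?C" "w \<noteq> x" "w \<noteq> y" using xy by blast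
      with xy show False using cycle_free_no_triangle[OF sg cf adj[of x y] adj[of y w] adj[of w x]] by blast
    qed
    with adj xy show ?thesis by blast
  qed blast
qed

section \<open>The upper bound\<close>

text \<open>In a cycle-free graph a double star with centres \<open>x\<close>, \<open>y\<close> is the tree
  \<open>P\<^sub>2(|N(x)| - 1, |N(y)| - 1)\<close>.\<close>
definition double_star :: "'a set \<Rightarrow> 'a set set \<Rightarrow> 'a \<Rightarrow> 'a \<Rightarrow> bool" where
  "double_star V E x y \<longleftrightarrow>
     x \<in> V \<and> y \<in> V \<and> {x, y} \<in> E \<and> neighbours V E x \<union> neighbours V E y = V"

lemma degree_less_card:
  assumes "simple_graph V E" "x \<in> V"
  shows "degree E x < card V"
proof -
  have fV: "finite V" using assms(1) unfolding simple_graph_def by simp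
  have "neighbours V E x \<subseteq> V - {x}"
    using simple_graph_edgeD[OF assms(1)] unfolding neighbours_def by auto
  then have "card (neighbours V E x) < card V"
    using fV assms(2) by (meson card_Diff1_less card_mono finite_Diff le_less_trans)
  with degree_eq_card_neighbours[OF assms(1)] show ?thesis by simp
qed

lemma sum_degree_ecc_le_2_cases:
  assumes sg: "simple_graph V E" and conn: "connected_graph V E" and cf: "cycle_free V E"
    and no_univ: "\<And>z. \<not> universal_vertex V E z"
  shows "(\<Sum>x\<in>{x \<in> V. ecc V E x \<le> 2}. degree E x) < card V \<or>
    (\<exists>x y. {x, y} \<in> E \<and>
      (\<Sum>x\<in>{x \<in> V. ecc V E x \<le> 2}. degree E x) = card (neighbours V E x \<union> neighbours V E y))"
  using ecc_le_2_vertices_cases[OF sg conn cf no_univ]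
proof (elim disjE exE conjE)
  fix x assume C: "{x \<in> V. ecc V E x \<le> 2} \<subseteq> {x}"
  have "V \<noteq> {}" using conn unfolding connected_graph_def by simp
  moreover have "finite V" using sg unfolding simple_graph_def by simp
  ultimately have "0 < card V" by auto
  with C degree_less_card[OF sg] show ?thesis
    by (cases "{x \<in> V. ecc V E x \<le> 2} = {x}") (auto dest: subset_singletonD)
next
  fix x y assume C: "{x \<in> V. ecc V E x \<le> 2} = {x, y}" and xy: "{x, y} \<in> E"
  have fV: "finite V" using sg unfolding simple_graph_def by simp
  have "x \<noteq> y" using simple_graph_edgeD[OF sg xy] by simp
  moreover have "finite (neighbours V E x)" "finite (neighbours V E y)"
    using fV unfolding neighbours_def by auto
  ultimately have "(\<Sum>x\<in>{x \<in> V. ecc V E x \<le> 2}. degree E x) = card (neighbours V E x \<union> neighbours V E y)"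
    unfolding C using cycle_free_neighbours_disjoint[OF sg cf xy] degree_eq_card_neighbours[OF sg]
    by (simp add: card_Un_disjoint)
  with xy show ?thesis by blast
qed

lemma xi_ee_le_degree_sums:
  assumes "finite V" "\<And>x. x \<in> V \<Longrightarrow> 2 \<le> ecc V E x"
  shows "xi_ee V E \<le> (\<Sum>x\<in>V. real (degree E x)) / 3 + (\<Sum>x\<in>{x \<in> V. ecc V E x \<le> 2}. real (degree E x)) / 6"
proof -
  have "real (degree E x) / real (ecc V E x)
      \<le> real (degree E x) / 3 + (if ecc V E x \<le> 2 then real (degree E x) / 6 else 0)" if "x \<in> V" for x
  proof (cases "ecc V E x \<le> 2")
    case True
    with assms(2)[OF that] have "ecc V E x = 2" by simp
    then show ?thesis by simp
  next
    case False
    then have "real (degree E x) / real (ecc V E x) \<le> real (degree E x) / 3"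
      by (intro divide_left_mono) auto
    with False show ?thesis by simp
  qed
  then have "xi_ee V E \<le> (\<Sum>x\<in>V. real (degree E x) / 3 + (if ecc V E x \<le> 2 then real (degree E x) / 6 else 0))"
    unfolding xi_ee_def by (rule sum_mono)
  also have "\<dots> = (\<Sum>x\<in>V. real (degree E x)) / 3 + (\<Sum>x\<in>{x \<in> V. ecc V E x \<le> 2}. real (degree E x)) / 6"
    using sum.inter_filter[OF assms(1), of "\<lambda>x. real (degree E x) / 6" "\<lambda>x. ecc V E x \<le> 2"]
    by (simp add: sum.distrib sum_divide_distrib)
  finally show ?thesis .
qed

lemma sum_degree_ecc_le_2_le_card:
  assumes sg: "simple_graph V E" and conn: "connected_graph V E" and cf: "cycle_free V E"
    and no_univ: "\<And>z. \<not> universal_vertex V E z"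
  shows "(\<Sum>x\<in>{x \<in> V. ecc V E x \<le> 2}. degree E x) \<le> card V"
    and "(\<Sum>x\<in>{x \<in> V. ecc V E x \<le> 2}. degree E x) = card V \<Longrightarrow> \<exists>x y. double_star V E x y"
proof -
  let ?S = "\<Sum>x\<in>{x \<in> V. ecc V E x \<le> 2}. degree E x"
  have fV: "finite V" using sg unfolding simple_graph_def by simp
  have union_le: "card (neighbours V E x \<union> neighbours V E y) \<le> card V" for x y
    using fV by (intro card_mono) (auto simp: neighbours_def)
  note cases = sum_degree_ecc_le_2_cases[OF sg conn cf no_univ]
  with union_le show "?S \<le> card V" by fastforce
  assume "?S = card V"
  with cases obtain x y where xy: "{x, y} \<in> E" "card (neighbours V E x \<union> neighbours V E y) = card V"
    by auto
  then have "neighbours V E x \<union> neighbours V E y = V"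
    using fV by (intro card_subset_eq) (auto simp: neighbours_def)
  with xy simple_graph_edgeD[OF sg xy(1)] show "\<exists>x y. double_star V E x y"
    unfolding double_star_def by blast
qed

lemma xi_ee_le_if_no_universal_vertex:
  assumes tree: "is_tree V E" and no_univ: "\<And>z. \<not> universal_vertex V E z"
  shows "xi_ee V E \<le> (5 * real (card V) - 4) / 6"
    and "xi_ee V E = (5 * real (card V) - 4) / 6 \<Longrightarrow> \<exists>x y. double_star V E x y"
proof -
  have sg: "simple_graph V E" and conn: "connected_graph V E" and cf: "cycle_free V E"
    using tree unfolding is_tree_def cycle_free_def by auto
  have fV: "finite V" using sg unfolding simple_graph_def by simp
  have "V \<noteq> {}" using conn unfolding connected_graph_def by simp
  let ?S = "\<Sum>x\<in>{x \<in> V. ecc V E x \<le> 2}. degree E x"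
  have "xi_ee V E \<le> (\<Sum>x\<in>V. real (degree E x)) / 3 + real ?S / 6"
    using xi_ee_le_degree_sums[OF fV] ecc_ge_2_if_not_universal_vertex[OF conn fV _ no_univ] by simp
  also have "(\<Sum>x\<in>V. real (degree E x)) = 2 * real (card E)"
    using sum_degree_eq_twice_card_edges[OF sg] by (metis of_nat_sum of_nat_mult of_nat_numeral)
  finally have xi: "xi_ee V E \<le> (4 * real (card E) + real ?S) / 6" by simp
  have "card E < card V" using cycle_free_card_edges_less[OF sg cf \<open>V \<noteq> {}\<close>] .
  moreover have S: "?S \<le> card V" using sum_degree_ecc_le_2_le_card(1)[OF sg conn cf no_univ] .
  ultimately have "4 * real (card E) + real ?S \<le> 5 * real (card V) - 4" by linarith
  then have "(4 * real (card E) + real ?S) / 6 \<le> (5 * real (card V) - 4) / 6"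
    by (rule divide_right_mono) simp
  with xi show "xi_ee V E \<le> (5 * real (card V) - 4) / 6" by linarith
  assume "xi_ee V E = (5 * real (card V) - 4) / 6"
  with xi have "5 * real (card V) - 4 \<le> 4 * real (card E) + real ?S" by simp
  with \<open>card E < card V\<close> S have "?S = card V" by linarith
  then show "\<exists>x y. double_star V E x y" using sum_degree_ecc_le_2_le_card(2)[OF sg conn cf no_univ] by blast
qed

section \<open>Double stars\<close>

lemma double_star_sym: "double_star V E x y \<Longrightarrow> double_star V E y x"
  unfolding double_star_def by (simp add: insert_commute Un_commute conj_left_commute)

context
  fixes V :: "'a set" and E :: "'a set set" and x y :: 'a
  assumes sg: "simple_graph V E" and cf: "cycle_free V E" and ds: "double_star V E x y"
begin

lemma double_star_centres: "x \<in> V" "y \<in> V" "x \<noteq> y" "{x, y} \<in> E"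
proof -
  show xy: "{x, y} \<in> E" using ds unfolding double_star_def by simp
  show "x \<in> V" "y \<in> V" "x \<noteq> y" using simple_graph_edgeD[OF sg xy] by simp_all
qed

lemma double_star_dominates: "v \<in> V \<Longrightarrow> v \<in> neighbours V E x \<or> v \<in> neighbours V E y"
  using ds unfolding double_star_def by blast

lemma double_star_vertices:
  "V = insert x (insert y ((neighbours V E x - {y}) \<union> (neighbours V E y - {x})))"
proof (intro equalityI subsetI)
  fix v assume "v \<in> V"
  with double_star_dominates show "v \<in> insert x (insert y ((neighbours V E x - {y}) \<union> (neighbours V E y - {x})))"
    by blast
qed (use double_star_centres in \<open>auto simp: neighbours_def\<close>)

lemma double_star_leaves_disjoint: "(neighbours V E x - {y}) \<inter> (neighbours V E y - {x}) = {}"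
  using cycle_free_neighbours_disjoint[OF sg cf double_star_centres(4)] by blast

lemma double_star_centres_notin_leaves:
  "x \<notin> (neighbours V E x - {y}) \<union> (neighbours V E y - {x})"
  "y \<notin> (neighbours V E x - {y}) \<union> (neighbours V E y - {x})"
  using not_in_neighbours_self[OF sg, of x] not_in_neighbours_self[OF sg, of y] by auto

lemma finite_double_star_leaves: "finite (neighbours V E x - {y})" "finite (neighbours V E y - {x})"
proof -
  have "finite V" using sg unfolding simple_graph_def by simp
  then show "finite (neighbours V E x - {y})" "finite (neighbours V E y - {x})"
    unfolding neighbours_def by simp_all
qed

lemma card_double_star: "card V = card (neighbours V E x - {y}) + card (neighbours V E y - {x}) + 2"
proof -
  have "card V = card (insert x (insert y ((neighbours V E x - {y}) \<union> (neighbours V E y - {x}))))"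
    using double_star_vertices by (rule arg_cong)
  also have "\<dots> = card (neighbours V E x - {y}) + card (neighbours V E y - {x}) + 2"
    using double_star_centres(3) double_star_centres_notin_leaves finite_double_star_leaves
      double_star_leaves_disjoint
    by (simp add: card_Un_disjoint)
  finally show ?thesis .
qed

text \<open>An edge avoiding both centres would close a triangle or a square through them.\<close>
lemma double_star_edge_cover:
  assumes e: "e \<in> E"
  shows "x \<in> e \<or> y \<in> e"
proof (rule ccontr)
  assume not_cover: "\<not> (x \<in> e \<or> y \<in> e)"
  obtain a b where ab: "e = {a, b}" "a \<in> V" "b \<in> V" "a \<noteq> b"
    using simple_graph_edgeE[OF sg e] by blast
  with not_cover have ne: "a \<noteq> x" "a \<noteq> y" "b \<noteq> x" "b \<noteq> y" by auto
  have abE: "{a, b} \<in> E" "{b, a} \<in> E" using e ab by (auto simp: insert_commute)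
  have yx: "{y, x} \<in> E" using double_star_centres(4) by (simp add: insert_commute)
  have "{x, a} \<in> E \<or> {y, a} \<in> E" "{x, b} \<in> E \<or> {y, b} \<in> E"
    using double_star_dominates ab ne unfolding neighbours_def by blast+
  then show False
  proof (elim disjE)
    assume "{x, a} \<in> E" "{x, b} \<in> E"
    moreover from this(2) have "{b, x} \<in> E" by (simp add: insert_commute)
    ultimately show False using cycle_free_no_triangle[OF sg cf _ abE(1)] by blast
  next
    assume "{x, a} \<in> E" "{y, b} \<in> E"
    moreover from this(2) have "{b, y} \<in> E" by (simp add: insert_commute)
    ultimately show False using cycle_free_no_square[OF sg cf _ abE(1) _ yx] ne by blast
  next
    assume "{y, a} \<in> E" "{x, b} \<in> E"
    moreover from this(1) have "{a, y} \<in> E" by (simp add: insert_commute)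
    ultimately show False using cycle_free_no_square[OF sg cf _ abE(2) _ yx] ne by blast
  next
    assume "{y, a} \<in> E" "{y, b} \<in> E"
    moreover from this(2) have "{b, y} \<in> E" by (simp add: insert_commute)
    ultimately show False using cycle_free_no_triangle[OF sg cf _ abE(1)] by blast
  qed
qed

lemma double_star_edges:
  "E = insert {x, y} ((\<lambda>l. {x, l}) ` (neighbours V E x - {y}) \<union> (\<lambda>l. {y, l}) ` (neighbours V E y - {x}))"
proof (intro equalityI subsetI)
  fix e assume e: "e \<in> E"
  then obtain a b where ab: "e = {a, b}" "a \<in> V" "b \<in> V"
    using simple_graph_edgeE[OF sg] by blast
  with e double_star_edge_cover[OF e] show
    "e \<in> insert {x, y} ((\<lambda>l. {x, l}) ` (neighbours V E x - {y}) \<union> (\<lambda>l. {y, l}) ` (neighbours V E y - {x}))"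
    unfolding neighbours_def by (auto simp: insert_commute)
qed (use double_star_centres(4) in \<open>auto simp: neighbours_def\<close>)

lemma double_star_leaf_neighbours:
  assumes "v \<in> neighbours V E x - {y}"
  shows "neighbours V E v = {x}"
proof -
  have v: "v \<in> V" "{x, v} \<in> E" "v \<noteq> y" "v \<noteq> x"
    using assms simple_graph_edgeD[OF sg] unfolding neighbours_def by auto
  have vx: "{v, x} \<in> E" using v(2) by (simp add: insert_commute)
  have "u = x" if u: "u \<in> V" "{v, u} \<in> E" for u
  proof -
    have "u \<noteq> y"
    proof
      assume "u = y"
      with u(2) have "{y, v} \<in> E" by (simp add: insert_commute)
      then show False using cycle_free_no_triangle[OF sg cf vx double_star_centres(4)] by blast
    qed
    with double_star_edge_cover[OF u(2)] v show ?thesis by auto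
  qed
  with vx double_star_centres(1) show ?thesis unfolding neighbours_def by blast
qed

lemma degree_double_star_leaf:
  assumes v: "v \<in> neighbours V E x - {y}"
  shows "degree E v = 1"
  using degree_eq_card_neighbours[OF sg, of v] double_star_leaf_neighbours[OF v] by simp

lemma degree_double_star_centre: "degree E x = card (neighbours V E x - {y}) + 1"
proof -
  have fV: "finite V" using sg unfolding simple_graph_def by simp
  have "y \<in> neighbours V E x" using double_star_centres unfolding neighbours_def by simp
  moreover have "finite (neighbours V E x)" using fV unfolding neighbours_def by simp
  ultimately show ?thesis using degree_eq_card_neighbours[OF sg] card_Suc_Diff1 by fastforce
qed

lemma double_star_leaves_nonempty:
  assumes "\<not> universal_vertex V E x"
  shows "neighbours V E y - {x} \<noteq> {}"
proof
  assume "neighbours V E y - {x} = {}"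
  then have "{x, v} \<in> E" if "v \<in> V" "v \<noteq> x" for v
    using double_star_dominates[OF that(1)] that(2) unfolding neighbours_def by blast
  with double_star_centres(1) assms show False unfolding universal_vertex_def by blast
qed

context
  assumes conn: "connected_graph V E" and leaves_y: "neighbours V E y - {x} \<noteq> {}"
begin

lemma ecc_double_star_centre: "ecc V E x = 2"
proof -
  have fV: "finite V" using sg unfolding simple_graph_def by simp
  note centres = double_star_centres
  obtain w where w: "w \<in> neighbours V E y - {x}" using leaves_y by blast
  then have wV: "w \<in> V" "{y, w} \<in> E" "w \<noteq> x" unfolding neighbours_def by auto
  have "{x, w} \<notin> E"
    using w cycle_free_neighbours_disjoint[OF sg cf centres(4)] wV(1) unfolding neighbours_def by blast
  with wV have "\<not> gdist V E x w \<le> 1" using gdist_le_1_cases[OF conn centres(1) wV(1)] by blast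
  then have "2 \<le> gdist V E x w" by simp
  moreover have "gdist V E x v \<le> 2" if v: "v \<in> V" for v
  proof -
    consider "v = x" | "v = y" | "v \<in> neighbours V E x - {y}" | "v \<in> neighbours V E y - {x}"
      using v double_star_vertices by blast
    then show ?thesis
    proof cases
      case 1 with gdist_le_length[of V E "[x]" x v 0] centres show ?thesis by simp
    next
      case 2 with gdist_le_length[of V E "[x, y]" x v 1] centres show ?thesis by simp
    next
      case 3 with gdist_le_length[of V E "[x, v]" x v 1] centres show ?thesis by (simp add: neighbours_def)
    next
      case 4
      then have "is_walk V E [x, y, v]" using centres v unfolding neighbours_def by simp
      then show ?thesis using gdist_le_length[of V E "[x, y, v]" x v 2] by simp
    qed
  qed
  ultimately show ?thesis by (rule ecc_eqI[OF fV wV(1)])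
qed

lemma gdist_double_star_leaves:
  assumes v: "v \<in> neighbours V E x - {y}" and w: "w \<in> neighbours V E y - {x}"
  shows "2 < gdist V E v w"
proof (rule ccontr)
  note nbrs_v = double_star_leaf_neighbours[OF v]
  have vV: "v \<in> V" using v unfolding neighbours_def by simp
  have wV: "w \<in> V" "w \<noteq> x" using w unfolding neighbours_def by auto
  have xw: "{x, w} \<notin> E"
    using w cycle_free_neighbours_disjoint[OF sg cf double_star_centres(4)] wV(1)
    unfolding neighbours_def by blast
  assume "\<not> 2 < gdist V E v w"
  then have "gdist V E v w \<le> 2" by simp
  then consider "v = w" | "{v, w} \<in> E" | u where "u \<in> V" "{v, u} \<in> E" "{u, w} \<in> E"
    using gdist_le_2_cases[OF conn vV wV(1)] by blast
  then show False
  proof cases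
    case 1 with v w double_star_leaves_disjoint show False by blast
  next
    case 2
    have "w \<notin> neighbours V E v" using nbrs_v wV(2) by simp
    with 2 wV(1) show False unfolding neighbours_def by simp
  next
    case (3 u)
    then have "u \<in> neighbours V E v" unfolding neighbours_def by simp
    with nbrs_v have "u = x" by simp
    with 3 xw show False by simp
  qed
qed

lemma ecc_double_star_leaf:
  assumes v: "v \<in> neighbours V E x - {y}"
  shows "ecc V E v = 3"
proof -
  have fV: "finite V" using sg unfolding simple_graph_def by simp
  note centres = double_star_centres
  have vV: "v \<in> V" "{v, x} \<in> E" using v unfolding neighbours_def by (auto simp: insert_commute)
  obtain w where w: "w \<in> neighbours V E y - {x}" using leaves_y by blast
  then have wV: "w \<in> V" unfolding neighbours_def by simp
  have "3 \<le> gdist V E v w" using gdist_double_star_leaves[OF v w] by simp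
  moreover have "gdist V E v u \<le> 3" if u: "u \<in> V" for u
  proof -
    consider "u = x" | "u = y" | "u \<in> neighbours V E x - {y}" | "u \<in> neighbours V E y - {x}"
      using u double_star_vertices by blast
    then show ?thesis
    proof cases
      case 1
      then have "is_walk V E [v, u]" using centres vV by simp
      then show ?thesis using gdist_le_length[of V E "[v, u]" v u 1] by simp
    next
      case 2
      then have "is_walk V E [v, x, u]" using centres vV by simp
      then show ?thesis using gdist_le_length[of V E "[v, x, u]" v u 2] by simp
    next
      case 3
      then have "is_walk V E [v, x, u]" using centres vV u unfolding neighbours_def by simp
      then show ?thesis using gdist_le_length[of V E "[v, x, u]" v u 2] by simp
    next
      case 4
      then have "is_walk V E [v, x, y, u]" using centres vV u unfolding neighbours_def by simp
      then show ?thesis using gdist_le_length[of V E "[v, x, y, u]" v u 3] by simp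
    qed
  qed
  ultimately show ?thesis by (rule ecc_eqI[OF fV wV])
qed

end

end

lemma xi_ee_double_star:
  assumes sg: "simple_graph V E" and conn: "connected_graph V E" and cf: "cycle_free V E"
    and ds: "double_star V E x y"
    and leaves_x: "neighbours V E x - {y} \<noteq> {}" and leaves_y: "neighbours V E y - {x} \<noteq> {}"
  shows "xi_ee V E = (5 * real (card V) - 4) / 6"
proof -
  define Lx where "Lx = neighbours V E x - {y}"
  define Ly where "Ly = neighbours V E y - {x}"
  note ds' = double_star_sym[OF ds]
  let ?f = "\<lambda>v. real (degree E v) / real (ecc V E v)"
  have leaf: "?f v = 1 / 3" if "v \<in> Lx \<union> Ly" for v
  proof (cases "v \<in> Lx")
    case True
    then show ?thesis using degree_double_star_leaf[OF sg cf ds] ecc_double_star_leaf[OF sg cf ds conn leaves_y]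
      unfolding Lx_def by simp
  next
    case False
    with that have "v \<in> neighbours V E y - {x}" unfolding Ly_def by blast
    then show ?thesis
      using degree_double_star_leaf[OF sg cf ds'] ecc_double_star_leaf[OF sg cf ds' conn leaves_x] by simp
  qed
  have "xi_ee V E = sum ?f (insert x (insert y (Lx \<union> Ly)))"
    unfolding xi_ee_def Lx_def Ly_def using double_star_vertices[OF sg cf ds] by (rule arg_cong)
  also have "\<dots> = ?f x + ?f y + sum ?f (Lx \<union> Ly)"
    using double_star_centres(3)[OF sg cf ds] double_star_centres_notin_leaves[OF sg cf ds]
      finite_double_star_leaves[OF sg cf ds]
    unfolding Lx_def Ly_def by (simp add: add.assoc)
  also have "sum ?f (Lx \<union> Ly) = real (card Lx + card Ly) / 3"
  proof -
    have "finite Lx" "finite Ly" "Lx \<inter> Ly = {}"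
      using finite_double_star_leaves[OF sg cf ds] double_star_leaves_disjoint[OF sg cf ds]
      unfolding Lx_def Ly_def by simp_all
    moreover have "sum ?f (Lx \<union> Ly) = (\<Sum>v\<in>Lx \<union> Ly. 1 / 3)" using leaf by (rule sum.cong[OF refl])
    ultimately show ?thesis by (simp add: card_Un_disjoint)
  qed
  also have "?f x = (real (card Lx) + 1) / 2"
    using degree_double_star_centre[OF sg cf ds] ecc_double_star_centre[OF sg cf ds conn leaves_y]
    unfolding Lx_def by simp
  also have "?f y = (real (card Ly) + 1) / 2"
    using degree_double_star_centre[OF sg cf ds'] ecc_double_star_centre[OF sg cf ds' conn leaves_x]
    unfolding Ly_def by simp
  finally show ?thesis using card_double_star[OF sg cf ds] unfolding Lx_def Ly_def by (simp add: field_simps)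
qed

section \<open>Double stars are the trees \<open>P\<^sub>2(a, b)\<close>\<close>

lemma graph_iso_image:
  assumes inj: "inj_on f V" and edges: "\<And>e. e \<in> E \<Longrightarrow> e \<subseteq> V"
  shows "graph_iso V E (f ` V) ((`) f ` E)"
proof -
  have "{u, v} \<in> E \<longleftrightarrow> {f u, f v} \<in> (`) f ` E" if uv: "u \<in> V" "v \<in> V" for u v
  proof
    assume "{u, v} \<in> E"
    then have "f ` {u, v} \<in> (`) f ` E" by (rule imageI)
    then show "{f u, f v} \<in> (`) f ` E" by simp
  next
    assume "{f u, f v} \<in> (`) f ` E"
    then obtain e where e: "e \<in> E" "f ` e = f ` {u, v}" by auto
    have "{u, v} \<subseteq> V" using uv by simp
    then have "e = {u, v}" using inj_on_image_eq_iff[OF inj edges[OF e(1)]] e(2) by metis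
    with e(1) show "{u, v} \<in> E" by simp
  qed
  moreover have "bij_betw f V (f ` V)" using inj by (rule inj_on_imp_bij_betw)
  ultimately show ?thesis unfolding graph_iso_def by blast
qed

lemma graph_iso_double_star:
  assumes iso: "graph_iso V E V' E'" and ds: "double_star V' E' x' y'"
  shows "\<exists>x y. double_star V E x y"
proof -
  obtain f where f: "bij_betw f V V'" and adj: "\<And>u v. u \<in> V \<Longrightarrow> v \<in> V \<Longrightarrow> {u, v} \<in> E \<longleftrightarrow> {f u, f v} \<in> E'"
    using iso unfolding graph_iso_def by blast
  have "x' \<in> V'" "y' \<in> V'" using ds unfolding double_star_def by simp_all
  then obtain x y where xy: "x \<in> V" "y \<in> V" "f x = x'" "f y = y'"
    using f unfolding bij_betw_def by blast
  have "v \<in> neighbours V E x \<union> neighbours V E y" if v: "v \<in> V" for v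
  proof -
    have "f v \<in> neighbours V' E' x' \<union> neighbours V' E' y'"
      using ds bij_betw_apply[OF f v] unfolding double_star_def by simp
    with adj[OF xy(1) v] adj[OF xy(2) v] xy v show ?thesis unfolding neighbours_def by auto
  qed
  moreover have "{x, y} \<in> E" using adj[OF xy(1,2)] ds xy unfolding double_star_def by simp
  ultimately have "double_star V E x y"
    using xy unfolding double_star_def by (auto simp: neighbours_def)
  then show ?thesis by blast
qed

lemma double_star_P2: "double_star (P2_verts a b) (P2_edges a b) 0 1"
  unfolding double_star_def
proof (intro conjI)
  show "{0, 1} \<in> P2_edges a b" by (simp add: P2_edges_def)
  have "k \<in> neighbours (P2_verts a b) (P2_edges a b) 0 \<union> neighbours (P2_verts a b) (P2_edges a b) 1"
    if k: "k \<in> P2_verts a b" for k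
  proof -
    consider "k = 0" | "k = 1" | "k \<in> {2..a + 1}" | "k \<in> {a + 2..a + b + 1}"
      using k unfolding P2_verts_def by force
    then show ?thesis
    proof cases
      case 1
      have "{1, 0} \<in> P2_edges a b" by (simp add: P2_edges_def insert_commute)
      with 1 k show ?thesis unfolding neighbours_def by simp
    next
      case 3
      then have "{0, k} \<in> P2_edges a b" unfolding P2_edges_def by blast
      with k show ?thesis unfolding neighbours_def by simp
    next
      case 4
      then have "{1, k} \<in> P2_edges a b" unfolding P2_edges_def by blast
      with k show ?thesis unfolding neighbours_def by simp
    qed (use k in \<open>simp add: neighbours_def P2_edges_def\<close>)
  qed
  then show "neighbours (P2_verts a b) (P2_edges a b) 0 \<union> neighbours (P2_verts a b) (P2_edges a b) 1
      = P2_verts a b"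
    unfolding neighbours_def by blast
qed (simp_all add: P2_verts_def)

lemma double_star_labelling:
  assumes sg: "simple_graph V E" and cf: "cycle_free V E" and ds: "double_star V E x y"
    and a: "card (neighbours V E x - {y}) = a" and b: "card (neighbours V E y - {x}) = b"
  obtains f :: "'a \<Rightarrow> nat" where "f x = 0" "f y = 1"
    "f ` (neighbours V E x - {y}) = {2..a + 1}" "f ` (neighbours V E y - {x}) = {a + 2..a + b + 1}"
proof -
  define Lx where "Lx = neighbours V E x - {y}"
  define Ly where "Ly = neighbours V E y - {x}"
  have disj: "x \<notin> Lx \<union> Ly" "y \<notin> Lx \<union> Ly" "x \<noteq> y" "Lx \<inter> Ly = {}"
    using double_star_centres_notin_leaves[OF sg cf ds] double_star_centres(3)[OF sg cf ds]
      double_star_leaves_disjoint[OF sg cf ds]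
    unfolding Lx_def Ly_def by auto
  have fin: "finite Lx" "finite Ly" using finite_double_star_leaves[OF sg cf ds] unfolding Lx_def Ly_def .
  have "card Lx = card {2..a + 1}" "card Ly = card {a + 2..a + b + 1}"
    using a b unfolding Lx_def Ly_def by simp_all
  then obtain g1 g2 where g1: "bij_betw g1 Lx {2..a + 1}" and g2: "bij_betw g2 Ly {a + 2..a + b + 1}"
    using finite_same_card_bij[OF fin(1) finite_atLeastAtMost] finite_same_card_bij[OF fin(2) finite_atLeastAtMost]
    by blast
  define f where "f v = (if v = x then 0 else if v = y then 1 else if v \<in> Lx then g1 v else g2 v)" for v
  have "f ` Lx = g1 ` Lx" using disj unfolding f_def by (intro image_cong) auto
  moreover have "f ` Ly = g2 ` Ly" using disj unfolding f_def by (intro image_cong) auto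
  ultimately have "f ` Lx = {2..a + 1}" "f ` Ly = {a + 2..a + b + 1}"
    using g1 g2 unfolding bij_betw_def by simp_all
  moreover have "f x = 0" "f y = 1" using disj(3) unfolding f_def by simp_all
  ultimately show ?thesis using that unfolding Lx_def Ly_def by blast
qed

lemma double_star_graph_iso_P2:
  assumes sg: "simple_graph V E" and cf: "cycle_free V E" and ds: "double_star V E x y"
    and a: "card (neighbours V E x - {y}) = a" and b: "card (neighbours V E y - {x}) = b"
  shows "graph_iso V E (P2_verts a b) (P2_edges a b)"
proof -
  obtain f where fx: "f x = 0" and fy: "f y = 1"
    and fLx: "f ` (neighbours V E x - {y}) = {2..a + 1}"
    and fLy: "f ` (neighbours V E y - {x}) = {a + 2..a + b + 1}"
    using double_star_labelling[OF sg cf ds a b] .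
  have "f ` V = f ` insert x (insert y ((neighbours V E x - {y}) \<union> (neighbours V E y - {x})))"
    using double_star_vertices[OF sg cf ds] by (rule arg_cong)
  also have "\<dots> = insert 0 (insert 1 ({2..a + 1} \<union> {a + 2..a + b + 1}))"
    by (simp add: image_Un fx fy fLx fLy)
  also have "\<dots> = P2_verts a b" unfolding P2_verts_def by (rule set_eqI) (simp; presburger)
  finally have fV: "f ` V = P2_verts a b" .
  have "finite V" using sg unfolding simple_graph_def by simp
  moreover have "card V = a + b + 2" using card_double_star[OF sg cf ds] a b by simp
  ultimately have inj: "inj_on f V" using fV by (intro eq_card_imp_inj_on) (simp_all add: P2_verts_def)
  have "(`) f ` E = (`) f ` insert {x, y}
      ((\<lambda>l. {x, l}) ` (neighbours V E x - {y}) \<union> (\<lambda>l. {y, l}) ` (neighbours V E y - {x}))"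
    using double_star_edges[OF sg cf ds] by (rule arg_cong)
  also have "\<dots> = P2_edges a b"
    unfolding P2_edges_def fLx[symmetric] fLy[symmetric] by (simp add: image_Un image_image fx fy)
  finally have fE: "(`) f ` E = P2_edges a b" .
  have "e \<subseteq> V" if "e \<in> E" for e
    using simple_graph_edgeE[OF sg that] by blast
  then have "graph_iso V E (f ` V) ((`) f ` E)" by (rule graph_iso_image[OF inj])
  then show ?thesis unfolding fV fE .
qed

lemma double_star_bipartition_class:
  assumes sg: "simple_graph V E" and cf: "cycle_free V E" and ds: "double_star V E x y"
    and AB: "A \<union> B = V" "A \<inter> B = {}" "independent E A" "independent E B"
    and xA: "x \<in> A" and yB: "y \<in> B"
  shows "A = insert x (neighbours V E y - {x})"
proof (intro equalityI subsetI)
  fix v assume vA: "v \<in> A"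
  have "v \<notin> neighbours V E x"
    using vA xA AB(3) unfolding independent_def neighbours_def by blast
  moreover have "v \<noteq> y" using vA yB AB(2) by blast
  moreover have "v \<in> V" using vA AB(1) by blast
  ultimately show "v \<in> insert x (neighbours V E y - {x})"
    using double_star_vertices[OF sg cf ds] by blast
next
  fix v assume "v \<in> insert x (neighbours V E y - {x})"
  then consider "v = x" | "v \<in> V" "{y, v} \<in> E" unfolding neighbours_def by blast
  then show "v \<in> A"
  proof cases
    case 2
    then have "v \<notin> B" using yB AB(4) unfolding independent_def by blast
    with 2 AB(1) show ?thesis by blast
  qed (use xA in simp)
qed

lemma double_star_graph_iso_P2_bipartition:
  assumes sg: "simple_graph V E" and cf: "cycle_free V E" and ds: "double_star V E x y"
    and bip: "has_bipartition V E p q"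
  shows "graph_iso V E (P2_verts (p - 1) (q - 1)) (P2_edges (p - 1) (q - 1))"
proof -
  obtain A B where AB: "A \<union> B = V" "A \<inter> B = {}" "independent E A" "independent E B"
    and p: "card A = p" and q: "card B = q"
    using bip unfolding has_bipartition_def by blast
  have BA: "B \<union> A = V" "B \<inter> A = {}" using AB(1,2) by auto
  have fV: "finite V" using sg unfolding simple_graph_def by simp
  note centres = double_star_centres[OF sg cf ds]
  note ds' = double_star_sym[OF ds]
  have card_part: "card (insert u (neighbours V E w - {u})) - 1 = card (neighbours V E w - {u})" for u w
  proof -
    have "finite (neighbours V E w - {u})" using fV unfolding neighbours_def by simp
    then show ?thesis by (subst card_insert_disjoint) auto
  qed
  have x_in: "(x \<in> A \<and> y \<in> B) \<or> (x \<in> B \<and> y \<in> A)"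
    using centres AB unfolding independent_def by blast
  then show ?thesis
  proof
    assume "x \<in> A \<and> y \<in> B"
    then have "A = insert x (neighbours V E y - {x})" "B = insert y (neighbours V E x - {y})"
      using double_star_bipartition_class[OF sg cf ds AB] double_star_bipartition_class[OF sg cf ds' BA AB(4,3)]
      by auto
    then have "p - 1 = card (neighbours V E y - {x})" "q - 1 = card (neighbours V E x - {y})"
      using card_part p q by metis+
    then show ?thesis using double_star_graph_iso_P2[OF sg cf ds' refl refl] by (simp only:)
  next
    assume "x \<in> B \<and> y \<in> A"
    then have "B = insert x (neighbours V E y - {x})" "A = insert y (neighbours V E x - {y})"
      using double_star_bipartition_class[OF sg cf ds BA AB(4,3)] double_star_bipartition_class[OF sg cf ds' AB]
      by auto
    then have "p - 1 = card (neighbours V E x - {y})" "q - 1 = card (neighbours V E y - {x})"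
      using card_part p q by metis+
    then show ?thesis using double_star_graph_iso_P2[OF sg cf ds refl refl] by (simp only:)
  qed
qed

lemma xi_ee_graph_iso_P2:
  assumes tree: "is_tree V E" and no_univ: "\<And>z. \<not> universal_vertex V E z"
    and iso: "graph_iso V E (P2_verts a b) (P2_edges a b)"
  shows "xi_ee V E = (5 * real (card V) - 4) / 6"
proof -
  have sg: "simple_graph V E" and conn: "connected_graph V E" and cf: "cycle_free V E"
    using tree unfolding is_tree_def cycle_free_def by auto
  obtain x y where ds: "double_star V E x y"
    using graph_iso_double_star[OF iso double_star_P2] by blast
  have "neighbours V E x - {y} \<noteq> {}" "neighbours V E y - {x} \<noteq> {}"
    using double_star_leaves_nonempty[OF sg cf double_star_sym[OF ds] no_univ]
      double_star_leaves_nonempty[OF sg cf ds no_univ] .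
  then show ?thesis using xi_ee_double_star[OF sg conn cf ds] by simp
qed

theorem theorem4p6:
  fixes V :: "'a set" and E :: "'a set set" and p q n :: nat
  assumes "is_tree V E"
    and "card V = n"
    and "p + q = n"
    and "q \<ge> p" and "p > 2"
    and "has_bipartition V E p q"
  shows "xi_ee V E \<le> (5 * real n - 4) / 6 \<and>
         (xi_ee V E = (5 * real n - 4) / 6 \<longleftrightarrow>
            graph_iso V E (P2_verts (p - 1) (q - 1)) (P2_edges (p - 1) (q - 1)))"
proof -
  have sg: "simple_graph V E" and cf: "cycle_free V E"
    using assms(1) unfolding is_tree_def cycle_free_def by auto
  have no_univ: "\<And>z. \<not> universal_vertex V E z"
    using bipartition_not_universal_vertex[OF assms(6)] assms(4,5) by simp
  note bound = xi_ee_le_if_no_universal_vertex[OF assms(1) no_univ, unfolded assms(2)]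
  have "graph_iso V E (P2_verts (p - 1) (q - 1)) (P2_edges (p - 1) (q - 1))"
    if "xi_ee V E = (5 * real n - 4) / 6"
    using bound(2)[OF that] double_star_graph_iso_P2_bipartition[OF sg cf _ assms(6)] by blast
  moreover have "xi_ee V E = (5 * real n - 4) / 6"
    if "graph_iso V E (P2_verts (p - 1) (q - 1)) (P2_edges (p - 1) (q - 1))"
    using xi_ee_graph_iso_P2[OF assms(1) no_univ that] assms(2) by simp
  ultimately show ?thesis using bound(1) by blast
qed

end
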